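(* Let $L,K,M$ be positive integers, $0<\tau_p<\tau_c$, $\beta_{i,k}>0$, $p_k>0$, $\sigma_{\mathrm{UL}}^2>0$, $\sigma_{\mathrm{DL}}^2>0$, $P_{\max,i}>0$, and $\xi_k>0$, with $\hat\xi_k=2^{\xi_k\tau_c/(\tau_c-\tau_p)}-1$. Define $c_{i,k}=\beta_{i,k}$ and $b_{i,t}=\frac{Mp_t\tau_p\beta_{i,t}^2}{\hat\xi_t(p_t\tau_p\beta_{i,t}+\sigma_{\mathrm{UL}}^2)}$, and consider the linear program in the variables $\rho_{i,t}\ge0$ ($i=1,\dots,L$, $t=1,\dots,K$): $$\min\ \sum_{t=1}^K\sum_{i=1}^L\rho_{i,t}\quad\text{s.t.}\quad \sum_{t=1}^K\sum_{i=1}^L c_{i,k}\rho_{i,t}-\sum_{i=1}^L b_{i,k}\rho_{i,k}+\sigma_{\mathrm{DL}}^2\le0\ \ \forall k,\qquad \sum_{t=1}^K\rho_{i,t}\le P_{\max,i}\ \ \forall i,$$ with Lagrangian $\mathcal{L}=\sum_{t,i}\rho_{i,t}+\sum_{k}\lambda_k\big(\sum_{t,i}c_{i,k}\rho_{i,t}-\sum_i b_{i,k}\rho_{i,k}+\sigma_{\mathrm{DL}}^2\big)+\sum_i\mu_i\big(\sum_t\rho_{i,t}-P_{\max,i}\big)$, $\lambda_k\ge0$, $\mu_i\ge0$. Assume the program is feasible, let $\{\check\rho_{i,t}\}$ be an optimal solution and $\{\check\lambda_k,\check\mu_i\}$ optimal Lagrange multipliers. Then each user $t$ is served only by base stations with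 indices in $$\mathcal{S}_t=\underset{i\in\{1,\dots,L\}}{\mathrm{argmin}}\ \left(1+\sum_{k=1}^K\check\lambda_kc_{i,k}+\check\mu_i\right)\frac{1}{b_{i,t}},$$ i.e., $\check\rho_{i,t}>0$ implies $i\in\mathcal{S}_t$. In particular, user $t$ is served by one base station if $\mathcal{S}_t$ contains only one index, and by a subset of base stations (contained in $\mathcal{S}_t$) if $\mathcal{S}_t$ contains several indices.
   Context: The linear program is the total downlink transmit power minimization for a Massive MIMO system with $L$ base stations (BSs) of $M$ antennas, $K$ single-antenna users, MRT precoding and non-coherent joint transmission; $\rho_{i,t}$ is the power BS $i$ allocates to user $t$, and user $t$ is associated with (served by) BS $i$ if and only if $\rho_{i,t}\ne0$. The first constraint family encodes that user $k$'s spectral efficiency is at least $\xi_k$, the second the per-BS peak power $P_{\max,i}$. *)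

theory Defs
  imports Complex_Main "HOL-Library.Extended_Real"
begin

text \<open>Indices: base stations i < L, users t,k < K (0-based). Power allocations
  are functions rho :: nat => nat => real, rho i t; only entries with i < L, t < K matter.\<close>

definition xi_hat :: "real \<Rightarrow> real \<Rightarrow> real \<Rightarrow> real" where
  "xi_hat tau_c tau_p xi = 2 powr (xi * tau_c / (tau_c - tau_p)) - 1"

definition coef_b :: "nat \<Rightarrow> real \<Rightarrow> (nat \<Rightarrow> real) \<Rightarrow> real \<Rightarrow> real \<Rightarrow> (nat \<Rightarrow> real)
    \<Rightarrow> (nat \<Rightarrow> nat \<Rightarrow> real) \<Rightarrow> nat \<Rightarrow> nat \<Rightarrow> real" where
  "coef_b M tau_p p tau_c sUL xi beta i t =
     real M * p t * tau_p * (beta i t)\<^sup>2 /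
       (xi_hat tau_c tau_p (xi t) * (p t * tau_p * beta i t + sUL))"

definition objective :: "nat \<Rightarrow> nat \<Rightarrow> (nat \<Rightarrow> nat \<Rightarrow> real) \<Rightarrow> real" where
  "objective L K rho = (\<Sum>t<K. \<Sum>i<L. rho i t)"

definition se_constr :: "nat \<Rightarrow> nat \<Rightarrow> (nat \<Rightarrow> nat \<Rightarrow> real) \<Rightarrow> (nat \<Rightarrow> nat \<Rightarrow> real)
    \<Rightarrow> real \<Rightarrow> (nat \<Rightarrow> nat \<Rightarrow> real) \<Rightarrow> nat \<Rightarrow> real" where
  "se_constr L K c b sDL rho k =
     (\<Sum>t<K. \<Sum>i<L. c i k * rho i t) - (\<Sum>i<L. b i k * rho i k) + sDL"

definition pow_constr :: "nat \<Rightarrow> (nat \<Rightarrow> real) \<Rightarrow> (nat \<Rightarrow> nat \<Rightarrow> real) \<Rightarrow> nat \<Rightarrow> real" where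
  "pow_constr K Pmax rho i = (\<Sum>t<K. rho i t) - Pmax i"

definition feasible :: "nat \<Rightarrow> nat \<Rightarrow> (nat \<Rightarrow> nat \<Rightarrow> real) \<Rightarrow> (nat \<Rightarrow> nat \<Rightarrow> real)
    \<Rightarrow> real \<Rightarrow> (nat \<Rightarrow> real) \<Rightarrow> (nat \<Rightarrow> nat \<Rightarrow> real) \<Rightarrow> bool" where
  "feasible L K c b sDL Pmax rho \<longleftrightarrow>
     (\<forall>i<L. \<forall>t<K. rho i t \<ge> 0) \<and>
     (\<forall>k<K. se_constr L K c b sDL rho k \<le> 0) \<and>
     (\<forall>i<L. pow_constr K Pmax rho i \<le> 0)"

definition optimal_solution :: "nat \<Rightarrow> nat \<Rightarrow> (nat \<Rightarrow> nat \<Rightarrow> real) \<Rightarrow> (nat \<Rightarrow> nat \<Rightarrow> real)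
    \<Rightarrow> real \<Rightarrow> (nat \<Rightarrow> real) \<Rightarrow> (nat \<Rightarrow> nat \<Rightarrow> real) \<Rightarrow> bool" where
  "optimal_solution L K c b sDL Pmax rho \<longleftrightarrow>
     feasible L K c b sDL Pmax rho \<and>
     (\<forall>rho'. feasible L K c b sDL Pmax rho' \<longrightarrow> objective L K rho \<le> objective L K rho')"

definition lagrangian :: "nat \<Rightarrow> nat \<Rightarrow> (nat \<Rightarrow> nat \<Rightarrow> real) \<Rightarrow> (nat \<Rightarrow> nat \<Rightarrow> real)
    \<Rightarrow> real \<Rightarrow> (nat \<Rightarrow> real) \<Rightarrow> (nat \<Rightarrow> nat \<Rightarrow> real) \<Rightarrow> (nat \<Rightarrow> real) \<Rightarrow> (nat \<Rightarrow> real) \<Rightarrow> real" where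
  "lagrangian L K c b sDL Pmax rho lam mu =
     objective L K rho + (\<Sum>k<K. lam k * se_constr L K c b sDL rho k)
       + (\<Sum>i<L. mu i * pow_constr K Pmax rho i)"

text \<open>Lagrange dual function: infimum of the Lagrangian over the domain rho \<ge> 0
  (extended reals, since it may be -\<infinity>).\<close>

definition dual_fun :: "nat \<Rightarrow> nat \<Rightarrow> (nat \<Rightarrow> nat \<Rightarrow> real) \<Rightarrow> (nat \<Rightarrow> nat \<Rightarrow> real)
    \<Rightarrow> real \<Rightarrow> (nat \<Rightarrow> real) \<Rightarrow> (nat \<Rightarrow> real) \<Rightarrow> (nat \<Rightarrow> real) \<Rightarrow> ereal" where
  "dual_fun L K c b sDL Pmax lam mu =
     (INF rho \<in> {rho. \<forall>i<L. \<forall>t<K. rho i t \<ge> 0}. ereal (lagrangian L K c b sDL Pmax rho lam mu))"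

definition optimal_multipliers :: "nat \<Rightarrow> nat \<Rightarrow> (nat \<Rightarrow> nat \<Rightarrow> real) \<Rightarrow> (nat \<Rightarrow> nat \<Rightarrow> real)
    \<Rightarrow> real \<Rightarrow> (nat \<Rightarrow> real) \<Rightarrow> (nat \<Rightarrow> real) \<Rightarrow> (nat \<Rightarrow> real) \<Rightarrow> bool" where
  "optimal_multipliers L K c b sDL Pmax lam mu \<longleftrightarrow>
     (\<forall>k<K. lam k \<ge> 0) \<and> (\<forall>i<L. mu i \<ge> 0) \<and>
     (\<forall>lam' mu'. (\<forall>k<K. lam' k \<ge> 0) \<longrightarrow> (\<forall>i<L. mu' i \<ge> 0) \<longrightarrow>
        dual_fun L K c b sDL Pmax lam' mu' \<le> dual_fun L K c b sDL Pmax lam mu)"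

definition S_set :: "nat \<Rightarrow> nat \<Rightarrow> (nat \<Rightarrow> nat \<Rightarrow> real) \<Rightarrow> (nat \<Rightarrow> nat \<Rightarrow> real)
    \<Rightarrow> (nat \<Rightarrow> real) \<Rightarrow> (nat \<Rightarrow> real) \<Rightarrow> nat \<Rightarrow> nat set" where
  "S_set L K c b lam mu t =
     (let f = (\<lambda>i. (1 + (\<Sum>k<K. lam k * c i k) + mu i) * (1 / b i t))
      in {i. i < L \<and> (\<forall>j<L. f i \<le> f j)})"

end

theory Submission
  imports Defs "HOL-Library.Function_Algebras" "HOL-Analysis.Product_Vector"
begin

text \<open>
  The allocation problem is a linear program, so strong duality holds; here it is derived from
  Farkas' lemma, proved by eliminating one constraint at a time. Consequently the optimal dual
  value equals the primal optimum, and the optimal allocation minimises the Lagrangian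
  of the optimal multipliers \<open>\<lambda>, \<mu>\<close> over the orthant \<open>\<rho> \<ge> 0\<close>. The Lagrangian is affine in \<open>\<rho>\<close>, with coefficient
  \<open>1 + \<Sum>\<^sub>k \<lambda>\<^sub>k c\<^sub>i\<^sub>k + \<mu>\<^sub>i - \<lambda>\<^sub>t b\<^sub>i\<^sub>t\<close> at \<open>\<rho>\<^sub>i\<^sub>t\<close>; minimality over the orthant makes these reduced
  costs nonnegative and zero wherever \<open>\<rho>\<^sub>i\<^sub>t > 0\<close>. Dividing by \<open>b\<^sub>i\<^sub>t > 0\<close>, the ratio defining
  \<open>S\<^sub>t\<close> equals \<open>\<lambda>\<^sub>t\<close> at every base station serving user \<open>t\<close> and is at least \<open>\<lambda>\<^sub>t\<close> at every other.
\<close>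

instantiation "fun" :: (type, real_vector) real_vector
begin

definition scaleR_fun :: "real \<Rightarrow> ('a \<Rightarrow> 'b) \<Rightarrow> 'a \<Rightarrow> 'b" where
  "scaleR_fun s f = (\<lambda>x. s *\<^sub>R f x)"

instance
  by standard (simp_all add: scaleR_fun_def fun_eq_iff scaleR_add_right scaleR_add_left)

end

lemma linear_diff_scaled:
  fixes f g :: "'v::real_vector \<Rightarrow> real"
  assumes "linear f" "linear g"
  shows "linear (\<lambda>x. f x - k * g x)"
  using assms unfolding linear_iff by (simp add: algebra_simps)

lemma farkas_homogeneous:
  fixes a :: "'i \<Rightarrow> 'v::real_vector \<Rightarrow> real" and c :: "'v \<Rightarrow> real"
  assumes "finite J" "\<forall>j\<in>J. linear (a j)" "linear c"
    and "\<forall>x. (\<forall>j\<in>J. 0 \<le> a j x) \<longrightarrow> 0 \<le> c x"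
  shows "\<exists>l. (\<forall>j\<in>J. 0 \<le> l j) \<and> (\<forall>x. c x = (\<Sum>j\<in>J. l j * a j x))"
  using assms
proof (induction J arbitrary: a c rule: finite_induct)
  case empty
  have "c x = 0" for x
    using empty.prems(3)[rule_format, of x] empty.prems(3)[rule_format, of "- x"]
      linear_neg[OF empty.prems(2)] by simp
  then show ?case by simp
next
  case (insert j0 J)
  show ?case
  proof (cases "\<forall>x. (\<forall>j\<in>J. 0 \<le> a j x) \<longrightarrow> 0 \<le> c x")
    case True
    then obtain l where l: "\<forall>j\<in>J. 0 \<le> l j" "\<forall>x. c x = (\<Sum>j\<in>J. l j * a j x)"
      using insert.IH[of a c] insert.prems by blast
    have "(\<Sum>j\<in>insert j0 J. (l(j0 := 0)) j * a j x) = (\<Sum>j\<in>J. l j * a j x)" for x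
      using insert.hyps by (simp add: sum.insert) (intro sum.cong; auto)
    then show ?thesis
      using l by (intro exI[of _ "l(j0 := 0)"]) auto
  next
    case False
    then obtain xb where xb: "\<forall>j\<in>J. 0 \<le> a j xb" "c xb < 0" by auto
    define d where "d = a j0 xb"
    have "d < 0"
      using insert.prems(3) xb unfolding d_def by (metis insert_iff not_le)
    text \<open>Eliminate the constraint j0 along the ray through xb, which violates only it.\<close>
    define a' where "a' j x = a j x - a j xb / d * a j0 x" for j x
    define c' where "c' x = c x - c xb / d * a j0 x" for x
    have lin_j0: "linear (a j0)" using insert.prems(1) by simp
    have "\<forall>j\<in>J. linear (a' j)"
      using insert.prems(1) lin_j0 unfolding a'_def
      by (blast intro: linear_diff_scaled)
    have lin_c': "linear c'"
      using insert.prems(2) lin_j0 unfolding c'_def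
      by (blast intro: linear_diff_scaled)
    have "0 \<le> c' x" if "\<forall>j\<in>J. 0 \<le> a' j x" for x
    proof -
      define y where "y = x - (a j0 x / d) *\<^sub>R xb"
      have "a j y = a' j x" if "linear (a j)" for j
        using that \<open>d < 0\<close> unfolding y_def a'_def by (simp add: linear_diff linear_scale)
      then have "\<forall>j\<in>insert j0 J. 0 \<le> a j y"
        using \<open>\<forall>j\<in>J. 0 \<le> a' j x\<close> insert.prems(1) \<open>d < 0\<close> unfolding a'_def d_def
        by auto
      then have "0 \<le> c y" using insert.prems(3) by blast
      moreover have "c y = c' x"
        using insert.prems(2) unfolding y_def c'_def by (simp add: linear_diff linear_scale)
      ultimately show ?thesis by simp
    qed
    then obtain m where m: "\<forall>j\<in>J. 0 \<le> m j" "\<forall>x. c' x = (\<Sum>j\<in>J. m j * a' j x)"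
      using insert.IH[OF \<open>\<forall>j\<in>J. linear (a' j)\<close> lin_c'] by blast
    define S where "S = (\<Sum>j\<in>J. m j * a j xb)"
    have "0 \<le> S" unfolding S_def using m(1) xb(1) by (auto intro!: sum_nonneg)
    define l where "l = m(j0 := (c xb - S) / d)"
    have "c x = (\<Sum>j\<in>insert j0 J. l j * a j x)" for x
    proof -
      have "(\<Sum>j\<in>J. l j * a j x) = (\<Sum>j\<in>J. m j * a j x)"
        using insert.hyps by (intro sum.cong) (auto simp: l_def)
      moreover have "c' x = (\<Sum>j\<in>J. m j * a j x - m j * a j xb * (a j0 x / d))"
        using m(2) by (simp add: a'_def algebra_simps)
      then have "c' x = (\<Sum>j\<in>J. m j * a j x) - S * (a j0 x / d)"
        by (simp only: S_def sum_subtractf sum_distrib_right)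
      ultimately show ?thesis
        using insert.hyps \<open>d < 0\<close> by (simp add: c'_def l_def field_simps)
    qed
    moreover have "\<forall>j\<in>insert j0 J. 0 \<le> l j"
      using m(1) \<open>0 \<le> S\<close> xb(2) \<open>d < 0\<close> by (auto simp: l_def divide_nonpos_neg)
    ultimately show ?thesis by blast
  qed
qed

lemma farkas_affine:
  fixes a :: "'i \<Rightarrow> 'v::real_vector \<Rightarrow> real" and c :: "'v \<Rightarrow> real"
  assumes "finite J" "\<forall>j\<in>J. linear (a j)" "linear c"
    and feasible: "\<forall>j\<in>J. \<beta> j \<le> a j x0"
    and implied: "\<forall>x. (\<forall>j\<in>J. \<beta> j \<le> a j x) \<longrightarrow> \<gamma> \<le> c x"
  shows "\<exists>l. (\<forall>j\<in>J. 0 \<le> l j) \<and> (\<forall>x. c x = (\<Sum>j\<in>J. l j * a j x)) \<and> \<gamma> \<le> (\<Sum>j\<in>J. l j * \<beta> j)"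
proof -
  text \<open>Homogenise: \<open>(x, t)\<close> with \<open>t \<ge> 0\<close> (the extra constraint \<open>None\<close>) stands for \<open>x / t\<close>.\<close>
  define A where "A j p = (case j of None \<Rightarrow> snd p | Some j \<Rightarrow> a j (fst p) - snd p * \<beta> j)"
    for j and p :: "'v \<times> real"
  define C where "C p = c (fst p) - snd p * \<gamma>" for p :: "'v \<times> real"
  define J' where "J' = insert None (Some ` J)"
  have sum_J': "(\<Sum>j\<in>J'. f j) = f None + (\<Sum>j\<in>J. f (Some j))" for f :: "'i option \<Rightarrow> real"
    using \<open>finite J\<close> unfolding J'_def by (simp add: sum.reindex)
  have "\<forall>j\<in>J'. linear (A j)"
    using assms(2) unfolding J'_def A_def linear_iff by (auto simp: algebra_simps)
  moreover have "linear C"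
    using assms(3) unfolding C_def linear_iff by (auto simp: algebra_simps)
  moreover have "0 \<le> C (x, t)" if "\<forall>j\<in>J'. 0 \<le> A j (x, t)" for x t
  proof (cases "t = 0")
    case True
    text \<open>The ray from the feasible point x0 in direction x stays feasible.\<close>
    have "\<gamma> \<le> c x0 + s * c x" if "0 \<le> s" for s
    proof -
      have "\<forall>j\<in>J. \<beta> j \<le> a j (x0 + s *\<^sub>R x)"
        using \<open>\<forall>j\<in>J'. 0 \<le> A j (x, t)\<close> feasible \<open>0 \<le> s\<close> assms(2) True
        by (auto simp: J'_def A_def linear_add linear_scale add_increasing2)
      then show ?thesis using implied assms(3) by (auto simp: linear_add linear_scale)
    qed
    from this[of "(c x0 - \<gamma> + 1) / - c x"] this[of 0] have "0 \<le> c x"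
      by (cases "c x < 0") (auto simp: field_simps)
    then show ?thesis using True by (simp add: C_def)
  next
    case False
    then have "0 < t" using that by (simp add: J'_def A_def)
    have "\<forall>j\<in>J. \<beta> j \<le> a j ((1 / t) *\<^sub>R x)"
      using that \<open>0 < t\<close> assms(2) by (auto simp: J'_def A_def linear_scale field_simps)
    then have "\<gamma> \<le> c x / t" using implied assms(3) by (auto simp: linear_scale)
    then show ?thesis using \<open>0 < t\<close> by (simp add: C_def field_simps)
  qed
  ultimately obtain L where L: "\<forall>j\<in>J'. 0 \<le> L j" "\<forall>p. C p = (\<Sum>j\<in>J'. L j * A j p)"
    using farkas_homogeneous[of J' A C] \<open>finite J\<close> unfolding J'_def by fastforce
  have "c x = (\<Sum>j\<in>J. L (Some j) * a j x)" for x
    using L(2)[rule_format, of "(x, 0)"] by (simp add: C_def A_def sum_J')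
  moreover have "- \<gamma> = L None - (\<Sum>j\<in>J. L (Some j) * \<beta> j)"
    using L(2)[rule_format, of "(0, 1)"] assms(2,3) by (simp add: C_def A_def sum_J' linear_0 sum_negf)
  then have "\<gamma> \<le> (\<Sum>j\<in>J. L (Some j) * \<beta> j)"
    using L(1) unfolding J'_def by auto
  ultimately show ?thesis using L(1) unfolding J'_def by (intro exI[of _ "L \<circ> Some"]) auto
qed

datatype lp_constraint = Nonneg nat nat | Rate nat | Budget nat

fun constraint_value :: "nat \<Rightarrow> nat \<Rightarrow> (nat \<Rightarrow> nat \<Rightarrow> real) \<Rightarrow> (nat \<Rightarrow> nat \<Rightarrow> real) \<Rightarrow> real
    \<Rightarrow> (nat \<Rightarrow> real) \<Rightarrow> lp_constraint \<Rightarrow> (nat \<Rightarrow> nat \<Rightarrow> real) \<Rightarrow> real" where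
  "constraint_value L K c b sDL Pmax (Nonneg i t) r = - r i t"
| "constraint_value L K c b sDL Pmax (Rate k) r = se_constr L K c b sDL r k"
| "constraint_value L K c b sDL Pmax (Budget i) r = pow_constr K Pmax r i"

definition lp_constraints :: "nat \<Rightarrow> nat \<Rightarrow> lp_constraint set" where
  "lp_constraints L K = (\<lambda>(i, t). Nonneg i t) ` ({..<L} \<times> {..<K}) \<union> Rate ` {..<K} \<union> Budget ` {..<L}"

lemma finite_lp_constraints: "finite (lp_constraints L K)"
  by (simp add: lp_constraints_def)

lemma sum_lp_constraints:
  "(\<Sum>j\<in>lp_constraints L K. f j) =
     (\<Sum>(i, t)\<in>{..<L} \<times> {..<K}. f (Nonneg i t)) + (\<Sum>k<K. f (Rate k)) + (\<Sum>i<L. f (Budget i))"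
proof -
  have inj: "inj_on (\<lambda>(i, t). Nonneg i t) A" "inj_on Rate B" "inj_on Budget C" for A B C
    by (auto simp: inj_on_def)
  show ?thesis
    unfolding lp_constraints_def
    by (subst sum.union_disjoint; (subst sum.union_disjoint)?)
       (auto simp: prod.case_distrib sum.reindex[OF inj(1)] sum.reindex[OF inj(2)] sum.reindex[OF inj(3)])
qed

lemma feasible_iff_constraints:
  "feasible L K c b sDL Pmax r \<longleftrightarrow>
     (\<forall>j\<in>lp_constraints L K. constraint_value L K c b sDL Pmax j r \<le> 0)"
  unfolding feasible_def lp_constraints_def ball_Un by (auto dest!: ball_imageD)

lemma linear_objective: "linear (objective L K)"
  unfolding linear_iff objective_def
  by (simp add: plus_fun_def scaleR_fun_def sum.distrib sum_distrib_left)

lemma linear_constraint_value: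
  "linear (\<lambda>r. constraint_value L K c b sDL Pmax j 0 - constraint_value L K c b sDL Pmax j r)"
  unfolding linear_iff
  by (cases j) (simp_all add: se_constr_def pow_constr_def plus_fun_def scaleR_fun_def
      sum.distrib sum_distrib_left algebra_simps)

lemma strong_duality_multipliers:
  assumes "optimal_solution L K c b sDL Pmax rho"
  obtains lam mu where "\<forall>k<K. 0 \<le> lam k" "\<forall>i<L. 0 \<le> mu i"
    and "\<And>r. \<forall>i<L. \<forall>t<K. 0 \<le> r i t \<Longrightarrow>
           objective L K rho \<le> lagrangian L K c b sDL Pmax r lam mu"
proof -
  let ?g = "constraint_value L K c b sDL Pmax" and ?J = "lp_constraints L K"
  have feasible: "\<forall>j\<in>?J. ?g j 0 \<le> ?g j 0 - ?g j rho"
    using assms by (simp add: optimal_solution_def feasible_iff_constraints)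
  have optimal: "\<forall>r. (\<forall>j\<in>?J. ?g j 0 \<le> ?g j 0 - ?g j r) \<longrightarrow> objective L K rho \<le> objective L K r"
    using assms by (simp add: optimal_solution_def feasible_iff_constraints)
  obtain l where l: "\<forall>j\<in>?J. 0 \<le> l j"
      "\<forall>r. objective L K r = (\<Sum>j\<in>?J. l j * (?g j 0 - ?g j r))"
      "objective L K rho \<le> (\<Sum>j\<in>?J. l j * ?g j 0)"
    using farkas_affine[OF finite_lp_constraints _ linear_objective feasible optimal]
      linear_constraint_value by blast
  define lam where "lam k = l (Rate k)" for k
  define mu where "mu i = l (Budget i)" for i
  show ?thesis
  proof
    show "\<forall>k<K. 0 \<le> lam k" "\<forall>i<L. 0 \<le> mu i"
      using l(1) by (auto simp: lam_def mu_def lp_constraints_def)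
  next
    fix r :: "nat \<Rightarrow> nat \<Rightarrow> real"
    assume r: "\<forall>i<L. \<forall>t<K. 0 \<le> r i t"
    have "objective L K r + (\<Sum>j\<in>?J. l j * ?g j r) = (\<Sum>j\<in>?J. l j * ?g j 0)"
      using l(2) by (simp add: algebra_simps sum_subtractf)
    moreover have "(\<Sum>j\<in>?J. l j * ?g j r) =
        - (\<Sum>(i, t)\<in>{..<L} \<times> {..<K}. l (Nonneg i t) * r i t)
        + (\<Sum>k<K. lam k * se_constr L K c b sDL r k) + (\<Sum>i<L. mu i * pow_constr K Pmax r i)"
      by (simp add: sum_lp_constraints lam_def mu_def case_prod_beta sum_negf)
    moreover have "0 \<le> (\<Sum>(i, t)\<in>{..<L} \<times> {..<K}. l (Nonneg i t) * r i t)"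
      using l(1) r unfolding lp_constraints_def ball_Un by (auto dest!: ball_imageD intro!: sum_nonneg)
    ultimately show "objective L K rho \<le> lagrangian L K c b sDL Pmax r lam mu"
      using l(3) unfolding lagrangian_def by linarith
  qed
qed

lemma optimal_multipliers_lagrangian_ge_optimum:
  assumes "optimal_solution L K c b sDL Pmax rho" "optimal_multipliers L K c b sDL Pmax lam mu"
    and "\<forall>i<L. \<forall>t<K. 0 \<le> r i t"
  shows "objective L K rho \<le> lagrangian L K c b sDL Pmax r lam mu"
proof -
  obtain lam' mu' where "\<forall>k<K. 0 \<le> lam' k" "\<forall>i<L. 0 \<le> mu' i"
    and lam'_mu': "\<And>r. \<forall>i<L. \<forall>t<K. 0 \<le> r i t \<Longrightarrow>
           objective L K rho \<le> lagrangian L K c b sDL Pmax r lam' mu'"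
    using strong_duality_multipliers[OF assms(1)] by blast
  have "ereal (objective L K rho) \<le> dual_fun L K c b sDL Pmax lam' mu'"
    unfolding dual_fun_def using lam'_mu' by (auto intro!: INF_greatest)
  also have "\<dots> \<le> dual_fun L K c b sDL Pmax lam mu"
    using assms(2) \<open>\<forall>k<K. 0 \<le> lam' k\<close> \<open>\<forall>i<L. 0 \<le> mu' i\<close>
    unfolding optimal_multipliers_def by blast
  also have "\<dots> \<le> ereal (lagrangian L K c b sDL Pmax r lam mu)"
    unfolding dual_fun_def using assms(3) by (auto intro!: INF_lower)
  finally show ?thesis by simp
qed

lemma lagrangian_le_objective:
  assumes "feasible L K c b sDL Pmax rho" "\<forall>k<K. 0 \<le> lam k" "\<forall>i<L. 0 \<le> mu i"
  shows "lagrangian L K c b sDL Pmax rho lam mu \<le> objective L K rho"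
proof -
  have "(\<Sum>k<K. lam k * se_constr L K c b sDL rho k) \<le> 0"
    "(\<Sum>i<L. mu i * pow_constr K Pmax rho i) \<le> 0"
    using assms by (auto simp: feasible_def intro!: sum_nonpos mult_nonneg_nonpos)
  then show ?thesis unfolding lagrangian_def by simp
qed

definition reduced_cost :: "nat \<Rightarrow> (nat \<Rightarrow> nat \<Rightarrow> real) \<Rightarrow> (nat \<Rightarrow> nat \<Rightarrow> real)
    \<Rightarrow> (nat \<Rightarrow> real) \<Rightarrow> (nat \<Rightarrow> real) \<Rightarrow> nat \<Rightarrow> nat \<Rightarrow> real" where
  "reduced_cost K c b lam mu i t = 1 + (\<Sum>k<K. lam k * c i k) + mu i - lam t * b i t"

lemma lagrangian_eq_reduced_costs:
  "lagrangian L K c b sDL Pmax r lam mu =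
     (\<Sum>k<K. lam k * sDL) - (\<Sum>i<L. mu i * Pmax i)
     + (\<Sum>t<K. \<Sum>i<L. reduced_cost K c b lam mu i t * r i t)"
proof -
  have interference: "(\<Sum>k<K. lam k * (\<Sum>t<K. \<Sum>i<L. c i k * r i t)) =
      (\<Sum>t<K. \<Sum>i<L. (\<Sum>k<K. lam k * c i k) * r i t)"
  proof -
    have "(\<Sum>k<K. lam k * (\<Sum>t<K. \<Sum>i<L. c i k * r i t)) = (\<Sum>k<K. \<Sum>t<K. \<Sum>i<L. lam k * c i k * r i t)"
      by (simp add: sum_distrib_left mult.assoc)
    also have "\<dots> = (\<Sum>t<K. \<Sum>k<K. \<Sum>i<L. lam k * c i k * r i t)"
      by (rule sum.swap)
    also have "\<dots> = (\<Sum>t<K. \<Sum>i<L. \<Sum>k<K. lam k * c i k * r i t)"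
      by (intro sum.cong refl sum.swap)
    finally show ?thesis by (simp add: sum_distrib_right)
  qed
  have signal: "(\<Sum>k<K. lam k * (\<Sum>i<L. b i k * r i k)) = (\<Sum>t<K. \<Sum>i<L. lam t * b i t * r i t)"
    by (simp add: sum_distrib_left mult.assoc)
  have budget: "(\<Sum>i<L. mu i * pow_constr K Pmax r i) =
      (\<Sum>t<K. \<Sum>i<L. mu i * r i t) - (\<Sum>i<L. mu i * Pmax i)"
    using sum.swap[of "\<lambda>i t. mu i * r i t" "{..<K}" "{..<L}"]
    by (simp add: pow_constr_def right_diff_distrib sum_subtractf sum_distrib_left)
  have rate: "(\<Sum>k<K. lam k * se_constr L K c b sDL r k) =
      (\<Sum>t<K. \<Sum>i<L. (\<Sum>k<K. lam k * c i k) * r i t) - (\<Sum>t<K. \<Sum>i<L. lam t * b i t * r i t)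
      + (\<Sum>k<K. lam k * sDL)"
    unfolding se_constr_def interference[symmetric] signal[symmetric]
    by (simp add: ring_distribs sum.distrib sum_subtractf)
  show ?thesis
    unfolding lagrangian_def rate budget objective_def reduced_cost_def
    by (simp add: ring_distribs sum.distrib sum_subtractf algebra_simps)
qed

lemma sum_linear_update:
  fixes g r :: "nat \<Rightarrow> nat \<Rightarrow> real"
  assumes "i < L" "t < K"
  shows "(\<Sum>t'<K. \<Sum>i'<L. g i' t' * (if i' = i \<and> t' = t then r i' t' + s else r i' t')) =
         (\<Sum>t'<K. \<Sum>i'<L. g i' t' * r i' t') + s * g i t"
proof -
  have "(\<Sum>t'<K. \<Sum>i'<L. g i' t' * (if i' = i \<and> t' = t then r i' t' + s else r i' t')) =
        (\<Sum>t'<K. \<Sum>i'<L. g i' t' * r i' t' + (if i' = i \<and> t' = t then s * g i t else 0))"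
    by (intro sum.cong refl) (auto simp: algebra_simps)
  also have "\<dots> = (\<Sum>t'<K. \<Sum>i'<L. g i' t' * r i' t')
      + (\<Sum>t'<K. \<Sum>i'<L. if i' = i \<and> t' = t then s * g i t else 0)"
    by (simp add: sum.distrib)
  also have "(\<Sum>t'<K. \<Sum>i'<L. if i' = i \<and> t' = t then s * g i t else 0) =
      (\<Sum>t'<K. if t' = t then s * g i t else 0)"
    using assms by (intro sum.cong refl) (auto simp: sum.delta)
  finally show ?thesis using assms by simp
qed

lemma orthant_minimizer_reduced_costs:
  fixes g r0 :: "nat \<Rightarrow> nat \<Rightarrow> real"
  assumes r0: "\<forall>i<L. \<forall>t<K. 0 \<le> r0 i t"
    and minimal: "\<And>r. \<forall>i<L. \<forall>t<K. 0 \<le> r i t \<Longrightarrow>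
           (\<Sum>t<K. \<Sum>i<L. g i t * r0 i t) \<le> (\<Sum>t<K. \<Sum>i<L. g i t * r i t)"
    and "i < L" "t < K"
  shows "0 \<le> g i t" and "0 < r0 i t \<Longrightarrow> g i t = 0"
proof -
  define shift where "shift s i' t' = (if i' = i \<and> t' = t then r0 i' t' + s else r0 i' t')" for s i' t'
  have shift_ge: "0 \<le> s * g i t" if "0 \<le> r0 i t + s" for s
  proof -
    have "\<forall>i'<L. \<forall>t'<K. 0 \<le> shift s i' t'" using r0 that by (simp add: shift_def)
    from minimal[OF this] show ?thesis
      using sum_linear_update[OF \<open>i < L\<close> \<open>t < K\<close>, of g r0 s] by (simp add: shift_def)
  qed
  from shift_ge[of 1] show "0 \<le> g i t" using r0 \<open>i < L\<close> \<open>t < K\<close> by simp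
  assume "0 < r0 i t"
  with shift_ge[of "- r0 i t"] \<open>0 \<le> g i t\<close> show "g i t = 0"
    by (simp add: mult_le_0_iff)
qed

lemma optimal_allocation_within_argmin:
  assumes b_pos: "\<forall>i<L. \<forall>t<K. 0 < b i t"
    and opt: "optimal_solution L K c b sDL Pmax rho"
    and mult: "optimal_multipliers L K c b sDL Pmax lam mu"
    and "t < K" "i < L" "0 < rho i t"
  shows "i \<in> S_set L K c b lam mu t"
proof -
  let ?rc = "reduced_cost K c b lam mu"
  have feasible: "feasible L K c b sDL Pmax rho"
    using opt by (simp add: optimal_solution_def)
  have rho_nonneg: "\<forall>i<L. \<forall>t<K. 0 \<le> rho i t"
    using feasible by (simp add: feasible_def)
  have "\<forall>k<K. 0 \<le> lam k" "\<forall>i<L. 0 \<le> mu i"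
    using mult by (simp_all add: optimal_multipliers_def)
  note lagrangian_le_objective[OF feasible this]
  then have "lagrangian L K c b sDL Pmax rho lam mu \<le> lagrangian L K c b sDL Pmax r lam mu"
    if "\<forall>i<L. \<forall>t<K. 0 \<le> r i t" for r
    using optimal_multipliers_lagrangian_ge_optimum[OF opt mult that] by linarith
  then have "(\<Sum>t<K. \<Sum>i<L. ?rc i t * rho i t) \<le> (\<Sum>t<K. \<Sum>i<L. ?rc i t * r i t)"
    if "\<forall>i<L. \<forall>t<K. 0 \<le> r i t" for r
    using that by (simp add: lagrangian_eq_reduced_costs)
  from orthant_minimizer_reduced_costs[OF rho_nonneg this]
  have rc_nonneg: "\<forall>j<L. 0 \<le> ?rc j t" and rc_zero: "?rc i t = 0"
    using \<open>t < K\<close> \<open>i < L\<close> \<open>0 < rho i t\<close> by auto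
  have "0 < b i t" using b_pos \<open>t < K\<close> \<open>i < L\<close> by simp
  with rc_zero have "(1 + (\<Sum>k<K. lam k * c i k) + mu i) * (1 / b i t) = lam t"
    by (simp add: reduced_cost_def)
  moreover have "lam t \<le> (1 + (\<Sum>k<K. lam k * c j k) + mu j) * (1 / b j t)" if "j < L" for j
    using rc_nonneg b_pos \<open>t < K\<close> that by (simp add: reduced_cost_def pos_le_divide_eq)
  ultimately show ?thesis
    using \<open>i < L\<close> by (simp add: S_set_def)
qed

lemma xi_hat_pos:
  assumes "0 < tau_p" "tau_p < tau_c" "0 < xi"
  shows "0 < xi_hat tau_c tau_p xi"
proof -
  have "(2::real) powr 0 < 2 powr (xi * tau_c / (tau_c - tau_p))"
    using assms by (intro powr_less_mono) auto
  then show ?thesis unfolding xi_hat_def by simp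
qed

lemma coef_b_pos:
  assumes "0 < M" "0 < tau_p" "tau_p < tau_c" "0 < beta i t" "0 < p t" "0 < xi t" "0 < sUL"
  shows "0 < coef_b M tau_p p tau_c sUL xi beta i t"
  using assms xi_hat_pos[of tau_p tau_c "xi t"] unfolding coef_b_def
  by (simp add: add_pos_pos)

theorem theorem3:
  fixes L K M :: nat
    and tau_p tau_c sUL sDL :: real
    and beta :: "nat \<Rightarrow> nat \<Rightarrow> real"
    and p xi Pmax :: "nat \<Rightarrow> real"
    and rho :: "nat \<Rightarrow> nat \<Rightarrow> real"
    and lam mu :: "nat \<Rightarrow> real"
  assumes "L > 0" "K > 0" "M > 0"
    and "0 < tau_p" "tau_p < tau_c"
    and "\<forall>i<L. \<forall>k<K. beta i k > 0"
    and "\<forall>k<K. p k > 0"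
    and "sUL > 0" "sDL > 0"
    and "\<forall>i<L. Pmax i > 0"
    and "\<forall>k<K. xi k > 0"
    and "\<exists>r. feasible L K beta (coef_b M tau_p p tau_c sUL xi beta) sDL Pmax r"
    and "optimal_solution L K beta (coef_b M tau_p p tau_c sUL xi beta) sDL Pmax rho"
    and "optimal_multipliers L K beta (coef_b M tau_p p tau_c sUL xi beta) sDL Pmax lam mu"
  shows "\<forall>t<K. \<forall>i<L. rho i t > 0 \<longrightarrow>
           i \<in> S_set L K beta (coef_b M tau_p p tau_c sUL xi beta) lam mu t"
proof -
  text \<open>Only positivity of the coefficients b is needed; feasibility already follows from optimality.\<close>
  have "\<forall>i<L. \<forall>t<K. 0 < coef_b M tau_p p tau_c sUL xi beta i t"
    using assms(3-8,11) by (simp add: coef_b_pos)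
  then show ?thesis
    using optimal_allocation_within_argmin assms(13,14) by blast
qed

end
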